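(* Let $w$ be a nonempty string. For any two strings $u, v \in \mathit{LFCand}(w)$ with $|u| < |v|$, $u$ is a prefix of $v$.
   Context: Let $\Sigma$ be a finite ordered alphabet, $\Sigma^+$ the set of nonempty strings over $\Sigma$. For nonempty strings $x,y$, write $x \prec y$ if either $x$ is a proper prefix of $y$, or at the first position $k$ where $x$ and $y$ differ we have $x[k] \prec y[k]$. For a set $S$ of nonempty strings, $\min_\prec S$ is its lexicographically smallest element. $\mathit{Suffix}(w)$ denotes the set of (nonempty) suffixes of $w$. For a nonempty string $w$, $\mathit{LFCand}(w) = \{x \in \mathit{Suffix}(w) \mid \exists y \in \Sigma^+ \text{ such that } xy = \min_\prec \mathit{Suffix}(wy)\}$. *)

theory Defs
  imports Main "HOL-Library.Sublist"
begin

definition lex_less :: "'a::linorder list \<Rightarrow> 'a list \<Rightarrow> bool" where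
  "lex_less x y \<longleftrightarrow>
     (strict_prefix x y) \<or>
     (\<exists>k < length x. k < length y \<and> (\<forall>i < k. x ! i = y ! i) \<and> x ! k < y ! k)"

definition Suffixes :: "'a list \<Rightarrow> 'a list set" where
  "Suffixes w = {x. x \<noteq> [] \<and> suffix x w}"

definition is_lex_min :: "'a::linorder list \<Rightarrow> 'a list set \<Rightarrow> bool" where
  "is_lex_min m S \<longleftrightarrow> m \<in> S \<and> (\<forall>s \<in> S. s \<noteq> m \<longrightarrow> lex_less m s)"

definition LFCand :: "'a::linorder list \<Rightarrow> 'a list set" where
  "LFCand w = {x \<in> Suffixes w. \<exists>y. y \<noteq> [] \<and> is_lex_min (x @ y) (Suffixes (w @ y))}"

end

theory Submission
  imports Defs
begin

text \<open>Suppose u is shorter than v but not a prefix of it, and let k be the first position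
  where they differ. Extending both by the witness y of u keeps v y a suffix of w y, so
  minimality of u y gives u!k < v!k; extending both by the witness of v gives v!k < u!k.\<close>

lemma lex_less_iff_first_mismatch:
  assumes "k < length x" "k < length z" "\<forall>i<k. x ! i = z ! i" "x ! k \<noteq> z ! k"
  shows "lex_less x z \<longleftrightarrow> x ! k < z ! k"
proof
  assume "lex_less x z"
  then consider "strict_prefix x z"
    | k' where "k' < length x" "k' < length z" "\<forall>i<k'. x ! i = z ! i" "x ! k' < z ! k'"
    unfolding lex_less_def by blast
  then show "x ! k < z ! k"
  proof cases
    case 1
    then obtain t where "z = x @ t" by (auto simp: strict_prefix_def prefix_def)
    then show ?thesis using assms by (simp add: nth_append)
  next
    case 2
    then show ?thesis using assms by (metis less_irrefl linorder_neqE_nat)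
  qed
next
  assume "x ! k < z ! k"
  then show "lex_less x z" using assms unfolding lex_less_def by blast
qed

lemma not_prefix_first_mismatch:
  assumes "length u \<le> length v" "\<not> prefix u v"
  obtains k where "k < length u" "\<forall>i<k. u ! i = v ! i" "u ! k \<noteq> v ! k"
proof -
  have "\<exists>k<length u. u ! k \<noteq> v ! k"
  proof (rule ccontr)
    assume "\<not> ?thesis"
    then have "take (length u) v = u" using assms(1) by (intro nth_equalityI) auto
    then show False using assms(2) take_is_prefix[of "length u" v] by simp
  qed
  then obtain k where "k < length u" "u ! k \<noteq> v ! k"
    and least: "\<forall>i<k. \<not> (i < length u \<and> u ! i \<noteq> v ! i)"
    using exists_least_iff[of "\<lambda>k. k < length u \<and> u ! k \<noteq> v ! k"] by blast
  moreover have "\<forall>i<k. u ! i = v ! i" using least \<open>k < length u\<close> by auto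
  ultimately show thesis using that by blast
qed

lemma lex_less_append_first_mismatch:
  assumes "k < length u" "k < length v" "\<forall>i<k. u ! i = v ! i" "u ! k \<noteq> v ! k"
  shows "lex_less (u @ y) (v @ z) \<longleftrightarrow> u ! k < v ! k"
  using lex_less_iff_first_mismatch[of k "u @ y" "v @ z"] assms by (simp add: nth_append)

lemma Suffixes_append: "v \<in> Suffixes w \<Longrightarrow> v @ y \<in> Suffixes (w @ y)"
  by (auto simp: Suffixes_def suffix_def)

lemma is_lex_min_append_lex_less:
  assumes "is_lex_min (u @ y) (Suffixes (w @ y))" "v \<in> Suffixes w" "length u \<noteq> length v"
  shows "lex_less (u @ y) (v @ y)"
proof -
  have "u \<noteq> v" using assms(3) by blast
  then have "v @ y \<noteq> u @ y" by simp
  moreover have "v @ y \<in> Suffixes (w @ y)" using assms(2) by (rule Suffixes_append)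
  ultimately show ?thesis using assms(1) unfolding is_lex_min_def by simp
qed

theorem lemma4:
  fixes w u v :: "'a::{linorder, finite} list"
  assumes "w \<noteq> []"
    and "u \<in> LFCand w" and "v \<in> LFCand w"
    and "length u < length v"
  shows "prefix u v"
proof (rule ccontr)
  assume "\<not> prefix u v"
  then obtain k where k: "k < length u" "\<forall>i<k. u ! i = v ! i" "u ! k \<noteq> v ! k"
    by (rule not_prefix_first_mismatch[OF less_imp_le[OF assms(4)]])
  have k_v: "k < length v" "\<forall>i<k. v ! i = u ! i" "v ! k \<noteq> u ! k"
    using k assms(4) by auto
  have u_suffix: "u \<in> Suffixes w" and v_suffix: "v \<in> Suffixes w"
    using assms(2,3) by (simp_all add: LFCand_def)
  obtain yu where "is_lex_min (u @ yu) (Suffixes (w @ yu))"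
    using assms(2) unfolding LFCand_def by blast
  then have "lex_less (u @ yu) (v @ yu)"
    by (rule is_lex_min_append_lex_less[OF _ v_suffix]) (use assms(4) in simp)
  then have "u ! k < v ! k"
    using lex_less_append_first_mismatch[OF k(1) k_v(1) k(2,3)] by simp
  obtain yv where "is_lex_min (v @ yv) (Suffixes (w @ yv))"
    using assms(3) unfolding LFCand_def by blast
  then have "lex_less (v @ yv) (u @ yv)"
    by (rule is_lex_min_append_lex_less[OF _ u_suffix]) (use assms(4) in simp)
  then have "v ! k < u ! k"
    using lex_less_append_first_mismatch[OF k_v(1) k(1) k_v(2,3)] by simp
  with \<open>u ! k < v ! k\<close> show False by simp
qed

end
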